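(* For all real $x$ and every real $\kappa \geq 1$, \[ Q(x) \geq \left(\frac{e^{(\pi(\kappa-1)+2)^{-1}}}{2\kappa}\sqrt{\frac{1}{\pi}(\kappa-1)(\pi(\kappa-1)+2)}\,\right) e^{-\frac{\kappa x^2}{2}}. \]
   Context: $Q$ denotes the Gaussian $Q$-function, $Q(x) = \frac{1}{\sqrt{2\pi}}\int_x^\infty e^{-t^2/2}\,dt$ for $x\in\mathbb{R}$. *)

theory Defs
  imports "HOL-Analysis.Analysis"
begin

definition gaussQ :: "real \<Rightarrow> real" where
  "gaussQ x = (1 / sqrt (2 * pi)) * (LBINT t:{x..}. exp (- (t\<^sup>2) / 2))"

end

theory Submission
  imports Defs "HOL-Probability.Distributions" "HOL-Real_Asymp.Real_Asymp"
begin

(*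
  Write phi for the standard Gaussian density, so that Q' = -phi.
  For kappa > 1 consider the weighted tail  W(x) = Q(x) exp(kappa x^2/2);  the
  theorem says that W is bounded below by the stated constant C(kappa).
  Since W'(x) = (kappa x Q(x) - phi(x)) exp(kappa x^2/2):
   - W decreases on (-inf, 0];
   - by Boyd's lower bound on the Mills ratio,
       Q(x) >= pi phi(x) / ((pi - 1) x + sqrt(x^2 + 2 pi))   for x >= 0,
     one has kappa x Q(x) >= phi(x) beyond an explicit point x0, so W
     increases on [x0, inf) and W(x0) >= phi(x0) exp(kappa x0^2/2)/(kappa x0);
   - the minimum of W on [0, x0] is attained at x0 or at an interior critical
     point z, where W(z) = phi(z) exp(kappa z^2/2)/(kappa z); this "critical
     value" is decreasing on (0, x0], and at x0 it equals C(kappa).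
  The file proves the needed facts about Q, then Boyd's bound (via a general
  "rise then fall" lemma), then the analysis of W (via a general minimum
  principle on an interval), and finally the theorem.  For kappa = 1 the
  constant vanishes and the claim is Q >= 0.
*)

lemma tail_integral_split:
  fixes f :: "real \<Rightarrow> real"
  assumes f: "integrable lborel f" and "x \<le> b"
  shows "(LBINT t:{x..}. f t) = integral {x..b} f + (LBINT t:{b<..}. f t)"
proof -
  have set_int: "set_integrable lborel A f" if "A \<in> sets borel" for A
    unfolding set_integrable_def using that f by (intro integrable_mult_indicator) auto
  have "{x..} = {x..b} \<union> {b<..}" using \<open>x \<le> b\<close> by auto
  moreover have "(LBINT t:{x..b} \<union> {b<..}. f t) = (LBINT t:{x..b}. f t) + (LBINT t:{b<..}. f t)"
    by (rule set_integral_Un) (auto intro: set_int)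
  ultimately have "(LBINT t:{x..}. f t) = (LBINT t:{x..b}. f t) + (LBINT t:{b<..}. f t)"
    by simp
  also have "(LBINT t:{x..b}. f t) = integral {x..b} f"
    by (rule set_borel_integral_eq_integral(2)[OF set_int]) simp
  finally show ?thesis .
qed

lemma tail_integral_has_derivative:
  fixes f :: "real \<Rightarrow> real"
  assumes f: "integrable lborel f" "continuous_on UNIV f"
  shows "((\<lambda>y. LBINT t:{y..}. f t) has_real_derivative - f x) (at x)"
proof -
  define J where "J = (LBINT t:{x+1<..}. f t)"
  have "((\<lambda>y. integral {y..x+1} f) has_real_derivative - f x) (at x within {x-1..x+1})"
    using integral_has_real_derivative'[of "x-1" "x+1" f x] continuous_on_subset[OF f(2)] by simp
  then have "((\<lambda>y. integral {y..x+1} f + J) has_real_derivative - f x) (at x)"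
    by (auto simp: at_within_Icc_at intro!: derivative_eq_intros)
  then show ?thesis
  proof (rule has_field_derivative_transform_within_open[of _ _ _ "{x-1<..<x+1}"])
    fix y :: real assume "y \<in> {x-1<..<x+1}"
    then show "integral {y..x+1} f + J = (LBINT t:{y..}. f t)"
      using tail_integral_split[OF f(1), of y "x+1"] by (simp add: J_def)
  qed auto
qed

definition gauss_density :: "real \<Rightarrow> real" where
  "gauss_density x = exp (- (x\<^sup>2) / 2) / sqrt (2 * pi)"

lemma gauss_density_pos: "gauss_density x > 0"
  by (simp add: gauss_density_def)

lemma gauss_density_integrable: "integrable lborel gauss_density"
proof -
  have "gauss_density = std_normal_density"
    by (auto simp: gauss_density_def std_normal_density_def)
  then show ?thesis using integrable_normal_density[of 1 0] by (metis zero_less_one)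
qed

lemma gauss_density_deriv: "(gauss_density has_real_derivative (- x * gauss_density x)) (at x)"
  unfolding gauss_density_def[abs_def]
  by (auto intro!: derivative_eq_intros simp: field_simps power2_eq_square)

lemma gaussQ_eq_tail_integral: "gaussQ x = (LBINT t:{x..}. gauss_density t)"
  unfolding gaussQ_def gauss_density_def by (simp add: set_integral_divide_zero field_simps)

lemma gaussQ_nonneg: "gaussQ x \<ge> 0"
  unfolding gaussQ_def set_lebesgue_integral_def
  by (auto intro!: integral_nonneg_AE mult_nonneg_nonneg simp: indicator_def)

lemma gaussQ_deriv: "(gaussQ has_real_derivative - gauss_density x) (at x)"
  unfolding gaussQ_eq_tail_integral[abs_def]
  by (rule tail_integral_has_derivative[OF gauss_density_integrable])
     (auto simp: gauss_density_def intro!: continuous_intros)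

(* Q(0) = 1/2, computed from the half-line Gaussian integral by the substitution t = sqrt 2 s. *)
lemma gaussQ_0: "gaussQ 0 = 1/2"
proof -
  have "(LBINT t:{0..}. exp (- (t\<^sup>2) / 2)) = (\<integral>t. indicator {0..} t *\<^sub>R exp (- (t\<^sup>2) / 2) \<partial>lborel)"
    by (simp add: set_lebesgue_integral_def)
  also have "\<dots> = \<bar>sqrt 2\<bar> *\<^sub>R (\<integral>s. indicator {0..} (0 + sqrt 2 * s) *\<^sub>R exp (- ((0 + sqrt 2 * s)\<^sup>2) / 2) \<partial>lborel)"
    by (rule lborel_integral_real_affine) simp
  also have "(\<lambda>s::real. indicator {0..} (0 + sqrt 2 * s) *\<^sub>R exp (- ((0 + sqrt 2 * s)\<^sup>2) / 2))
      = (\<lambda>s. indicator {0..} s *\<^sub>R exp (- s\<^sup>2))"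
    by (auto simp: indicator_def power_mult_distrib zero_le_mult_iff)
  also have "(\<integral>s. indicator {0..} s *\<^sub>R exp (- s\<^sup>2) \<partial>lborel) = sqrt pi / 2"
    using gaussian_moment_0 by (simp add: has_bochner_integral_iff)
  finally show ?thesis unfolding gaussQ_def by (simp add: real_sqrt_mult)
qed

lemma nonneg_of_rise_then_fall:
  fixes F F' G :: "real \<Rightarrow> real" and P :: "real \<Rightarrow> bool"
  assumes deriv: "\<And>t. t \<ge> 0 \<Longrightarrow> (F has_real_derivative F' t) (at t)"
    and downward: "\<And>s t. 0 \<le> s \<Longrightarrow> s \<le> t \<Longrightarrow> P t \<Longrightarrow> P s"
    and rise: "\<And>t. t \<ge> 0 \<Longrightarrow> P t \<Longrightarrow> F' t \<ge> 0"
    and fall: "\<And>t. t \<ge> 0 \<Longrightarrow> \<not> P t \<Longrightarrow> F' t \<le> 0"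
    and start: "F 0 \<ge> 0"
    and minorant: "\<And>t. G t \<le> F t" "(G \<longlongrightarrow> 0) at_top"
    and "x \<ge> 0"
  shows "F x \<ge> 0"
proof (cases "P x")
  case True
  have "F 0 \<le> F x"
    by (rule deriv_nonneg_imp_mono[OF deriv rise])
       (use \<open>x \<ge> 0\<close> True downward in auto)
  with start show ?thesis by simp
next
  case False
  have "G y \<le> F x" if "y \<ge> x" for y
  proof -
    have "F y \<le> F x"
      by (rule deriv_nonpos_imp_antimono[OF deriv fall])
         (use \<open>x \<ge> 0\<close> False downward that in auto)
    with minorant(1)[of y] show ?thesis by simp
  qed
  then show ?thesis
    by (intro tendsto_upperbound[OF minorant(2)]) (auto simp: eventually_at_top_linorder)
qed

definition boyd_den :: "real \<Rightarrow> real" where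
  "boyd_den x = (pi - 1) * x + sqrt (x\<^sup>2 + 2 * pi)"

definition boyd_bound :: "real \<Rightarrow> real" where
  "boyd_bound x = pi * gauss_density x / boyd_den x"

lemma boyd_den_pos:
  assumes "x \<ge> 0" shows "boyd_den x > 0"
proof -
  have "sqrt (x\<^sup>2 + 2 * pi) > 0" by (simp add: add_nonneg_pos)
  then show ?thesis unfolding boyd_den_def using assms pi_gt3 by (simp add: add_nonneg_pos)
qed

lemma boyd_den_deriv: "(boyd_den has_real_derivative (pi - 1) + x / sqrt (x\<^sup>2 + 2 * pi)) (at x)"
proof -
  have "x\<^sup>2 + 2 * pi > 0" by (simp add: add_nonneg_pos)
  then show ?thesis
    unfolding boyd_den_def[abs_def] by (auto intro!: derivative_eq_intros simp: field_simps)
qed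

lemma boyd_bound_0: "boyd_bound 0 = 1/2"
proof -
  have "sqrt (2 * pi) * sqrt (2 * pi) = 2 * pi" by simp
  then show ?thesis unfolding boyd_bound_def boyd_den_def gauss_density_def by simp
qed

(* Boyd's bound tends to 0, which controls the gap Q - boyd_bound at infinity. *)
lemma boyd_bound_tendsto_0: "(boyd_bound \<longlongrightarrow> 0) at_top"
  unfolding boyd_bound_def[abs_def] boyd_den_def gauss_density_def by real_asymp

(* The algebraic identity behind the sign of (Q - boyd_bound)', with r = sqrt(x^2 + 2 pi). *)
lemma boyd_numerator_identity:
  fixes x r :: real
  defines "g \<equiv> (pi - 1) * x + r"
  assumes r: "r\<^sup>2 = x\<^sup>2 + 2 * pi" "r \<noteq> 0"
  shows "(pi * x * g + pi * ((pi - 1) + x / r) - g\<^sup>2) * r * (r + x)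
         = pi * (r - x) * ((pi - 3) * r - x)"
proof -
  have "(pi * x * g + pi * ((pi - 1) + x / r) - g\<^sup>2) * r
        = pi * x * g * r + pi * ((pi - 1) * r + x) - g\<^sup>2 * r"
    using r(2) by (simp add: field_simps)
  also have "(\<dots>) * (r + x) = pi * (r - x) * ((pi - 3) * r - x)"
    using r(1) unfolding g_def by algebra
  finally show ?thesis .
qed

(* Derivative of the gap Q - boyd_bound: its sign is that of (pi - 3) r - x. *)
lemma boyd_gap_deriv:
  fixes x :: real
  defines "r \<equiv> sqrt (x\<^sup>2 + 2 * pi)"
  assumes "x \<ge> 0"
  shows "((\<lambda>y. gaussQ y - boyd_bound y) has_real_derivative
      pi * gauss_density x * (r - x) * ((pi - 3) * r - x) / (r * (r + x) * (boyd_den x)\<^sup>2)) (at x)"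
proof -
  define g where "g = boyd_den x"
  have r: "r\<^sup>2 = x\<^sup>2 + 2 * pi" "r > 0"
    unfolding r_def by (auto simp: add_nonneg_pos)
  have g: "g = (pi - 1) * x + r" "g > 0"
    using boyd_den_pos[OF assms(2)] by (auto simp: g_def boyd_den_def r_def)
  have "(boyd_bound has_real_derivative
      (pi * (- x * gauss_density x) * g - pi * gauss_density x * ((pi - 1) + x / r)) / g\<^sup>2) (at x)"
    unfolding boyd_bound_def[abs_def]
    using DERIV_quotient[OF DERIV_cmult[OF gauss_density_deriv] boyd_den_deriv, of x pi] g(2)
    by (simp add: g_def r_def power2_eq_square mult.commute)
  then have "((\<lambda>y. gaussQ y - boyd_bound y) has_real_derivative
      - gauss_density x - (pi * (- x * gauss_density x) * g - pi * gauss_density x * ((pi - 1) + x / r)) / g\<^sup>2) (at x)"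
    by (intro DERIV_diff gaussQ_deriv)
  also have "- gauss_density x - (pi * (- x * gauss_density x) * g - pi * gauss_density x * ((pi - 1) + x / r)) / g\<^sup>2
      = gauss_density x * (pi * x * g + pi * ((pi - 1) + x / r) - g\<^sup>2) / g\<^sup>2"
    using g(2) by (simp add: field_simps power2_eq_square)
  also have "\<dots> = gauss_density x * ((pi * x * g + pi * ((pi - 1) + x / r) - g\<^sup>2) * r * (r + x)) / (r * (r + x) * g\<^sup>2)"
    using r(2) assms(2) by simp
  also have "\<dots> = pi * gauss_density x * (r - x) * ((pi - 3) * r - x) / (r * (r + x) * g\<^sup>2)"
    using boyd_numerator_identity[OF r(1)] r(2) g(1) by simp
  finally show ?thesis unfolding g_def .
qed

(* The region where the gap increases, {x >= 0. x <= (pi - 3) sqrt(x^2 + 2 pi)},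
   is an initial segment of [0, inf). *)
lemma boyd_threshold_downward:
  assumes "0 \<le> s" "s \<le> t" "t \<le> (pi - 3) * sqrt (t\<^sup>2 + 2 * pi)"
  shows "s \<le> (pi - 3) * sqrt (s\<^sup>2 + 2 * pi)"
proof -
  have below_iff: "y \<le> (pi - 3) * sqrt (y\<^sup>2 + 2 * pi) \<longleftrightarrow> y\<^sup>2 * (1 - (pi - 3)\<^sup>2) \<le> 2 * pi * (pi - 3)\<^sup>2"
    if "y \<ge> 0" for y :: real
  proof -
    have "(pi - 3) * sqrt (y\<^sup>2 + 2 * pi) \<ge> 0" using pi_gt3 by simp
    then have "y \<le> (pi - 3) * sqrt (y\<^sup>2 + 2 * pi) \<longleftrightarrow> y\<^sup>2 \<le> ((pi - 3) * sqrt (y\<^sup>2 + 2 * pi))\<^sup>2"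
      using that by (meson power2_le_imp_le power_mono)
    also have "((pi - 3) * sqrt (y\<^sup>2 + 2 * pi))\<^sup>2 = (pi - 3)\<^sup>2 * (y\<^sup>2 + 2 * pi)"
      by (simp add: power_mult_distrib add_nonneg_nonneg)
    finally show ?thesis by (simp add: algebra_simps)
  qed
  have "(pi - 3)\<^sup>2 < 1\<^sup>2" using pi_gt3 pi_less_4 by (intro power_strict_mono) auto
  moreover have "s\<^sup>2 \<le> t\<^sup>2" using assms by (intro power_mono) auto
  ultimately have "s\<^sup>2 * (1 - (pi - 3)\<^sup>2) \<le> t\<^sup>2 * (1 - (pi - 3)\<^sup>2)" by (intro mult_right_mono) auto
  also have "\<dots> \<le> 2 * pi * (pi - 3)\<^sup>2" using below_iff[of t] assms by simp
  finally show ?thesis using below_iff[of s] assms(1) by simp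
qed

(* Boyd's inequality: the gap Q - boyd_bound vanishes at 0, rises, then falls towards a
   nonnegative limit, hence is nonnegative. *)
theorem gaussQ_ge_boyd_bound:
  assumes "x \<ge> 0"
  shows "gaussQ x \<ge> boyd_bound x"
proof -
  let ?r = "\<lambda>t::real. sqrt (t\<^sup>2 + 2 * pi)"
  have r_gt: "?r t > t" "?r t > 0" for t :: real
    using real_sqrt_less_mono[of "t\<^sup>2" "t\<^sup>2 + 2 * pi"] by (auto simp: add_nonneg_pos)
  define c where "c t = pi * gauss_density t * (?r t - t) / (?r t * (?r t + t) * (boyd_den t)\<^sup>2)" for t
  have c_pos: "c t > 0" if "t \<ge> 0" for t
    using r_gt[of t] that gauss_density_pos[of t] boyd_den_pos[OF that] by (simp add: c_def)
  have deriv: "((\<lambda>y. gaussQ y - boyd_bound y) has_real_derivative c t * ((pi - 3) * ?r t - t)) (at t)"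
    if "t \<ge> 0" for t
    using boyd_gap_deriv[OF that] by (simp add: c_def mult.commute mult.left_commute)
  have "gaussQ x - boyd_bound x \<ge> 0"
  proof (rule nonneg_of_rise_then_fall[OF deriv boyd_threshold_downward])
    show "c t * ((pi - 3) * ?r t - t) \<ge> 0" if "t \<ge> 0" "t \<le> (pi - 3) * ?r t" for t
      using c_pos[OF that(1)] that(2) by simp
    show "c t * ((pi - 3) * ?r t - t) \<le> 0" if "t \<ge> 0" "\<not> t \<le> (pi - 3) * ?r t" for t
      using c_pos[OF that(1)] that(2) by (simp add: mult_nonneg_nonpos)
    show "gaussQ 0 - boyd_bound 0 \<ge> 0"
      by (simp add: gaussQ_0 boyd_bound_0)
    show "- boyd_bound t \<le> gaussQ t - boyd_bound t" for t
      using gaussQ_nonneg[of t] by simp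
    show "((\<lambda>t. - boyd_bound t) \<longlongrightarrow> 0) at_top"
      using tendsto_minus[OF boyd_bound_tendsto_0] by simp
  qed (use assms in auto)
  then show ?thesis by simp
qed

lemma lower_bound_by_critical_points:
  fixes g g' :: "real \<Rightarrow> real"
  assumes "a < b"
    and deriv: "\<And>t. t \<in> {a..b} \<Longrightarrow> (g has_real_derivative g' t) (at t)"
    and left: "g' a < 0" and right: "g b \<ge> c"
    and crit: "\<And>t. a < t \<Longrightarrow> t < b \<Longrightarrow> g' t = 0 \<Longrightarrow> g t \<ge> c"
    and "x \<in> {a..b}"
  shows "g x \<ge> c"
proof -
  have "continuous_on {a..b} g"
    using deriv by (meson DERIV_isCont continuous_at_imp_continuous_on)
  then obtain z where z: "z \<in> {a..b}" and min: "\<And>y. y \<in> {a..b} \<Longrightarrow> g z \<le> g y"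
    using continuous_attains_inf[of "{a..b}" g] \<open>a < b\<close> by auto
  have "z \<noteq> a"
  proof
    assume "z = a"
    obtain d where d: "d > 0" "\<And>h. 0 < h \<Longrightarrow> h < d \<Longrightarrow> g (a + h) < g a"
      using DERIV_neg_dec_right[OF deriv left] \<open>a < b\<close> by force
    define h where "h = min (d / 2) (b - a)"
    have "0 < h" "h < d" "a + h \<in> {a..b}" using d \<open>a < b\<close> by (auto simp: h_def)
    then show False using d(2) min[of "a + h"] \<open>z = a\<close> by force
  qed
  have "g z \<ge> c"
  proof (cases "z = b")
    case False
    with z \<open>z \<noteq> a\<close> have inner: "a < z" "z < b" by auto
    have "g' z = 0"
    proof (rule DERIV_local_min[OF deriv])
      show "0 < min (z - a) (b - z)" using inner by simp
      show "\<forall>y. \<bar>z - y\<bar> < min (z - a) (b - z) \<longrightarrow> g z \<le> g y"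
        using min by (auto simp: abs_less_iff)
    qed (use z in auto)
    with crit inner show ?thesis by blast
  qed (use right in simp)
  then show ?thesis using min[OF \<open>x \<in> {a..b}\<close>] by simp
qed

definition weighted_tail :: "real \<Rightarrow> real \<Rightarrow> real" where
  "weighted_tail k x = gaussQ x * exp (k * x\<^sup>2 / 2)"

(* The value of W_k at a point z > 0 where k z Q(z) = phi(z), i.e. where W_k' vanishes. *)
definition critical_value :: "real \<Rightarrow> real \<Rightarrow> real" where
  "critical_value k z = gauss_density z * exp (k * z\<^sup>2 / 2) / (k * z)"

(* The point x0 beyond which Boyd's bound gives k x Q(x) >= phi(x). *)
definition crit_point :: "real \<Rightarrow> real" where
  "crit_point k = sqrt (2 / ((k - 1) * (pi * (k - 1) + 2)))"

lemma weighted_tail_deriv: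
  "(weighted_tail k has_real_derivative (k * x * gaussQ x - gauss_density x) * exp (k * x\<^sup>2 / 2)) (at x)"
  unfolding weighted_tail_def[abs_def]
  by (auto intro!: derivative_eq_intros gaussQ_deriv simp: algebra_simps power2_eq_square)

lemma weighted_tail_ge_critical_value:
  assumes "k > 0" "z > 0" "k * z * gaussQ z \<ge> gauss_density z"
  shows "weighted_tail k z \<ge> critical_value k z"
proof -
  have "gauss_density z / (k * z) \<le> gaussQ z" using assms by (simp add: field_simps)
  then have "gauss_density z / (k * z) * exp (k * z\<^sup>2 / 2) \<le> gaussQ z * exp (k * z\<^sup>2 / 2)"
    by (intro mult_right_mono) auto
  then show ?thesis unfolding weighted_tail_def critical_value_def by simp
qed

lemma crit_point_pos: "k > 1 \<Longrightarrow> crit_point k > 0"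
  unfolding crit_point_def by (auto intro!: divide_pos_pos mult_pos_pos add_pos_pos)

lemma crit_point_sq:
  assumes "k > 1" shows "(k - 1) * (pi * (k - 1) + 2) * (crit_point k)\<^sup>2 = 2"
proof -
  define A where "A = (k - 1) * (pi * (k - 1) + 2)"
  have "A > 0" unfolding A_def using assms by (intro mult_pos_pos add_pos_pos) auto
  then have "A * (sqrt (2 / A))\<^sup>2 = 2" by simp
  then show ?thesis unfolding crit_point_def A_def .
qed

(* Beyond x0, Boyd's bound yields k x Q(x) >= phi(x), so W_k increases there. *)
lemma gauss_ratio_beyond_crit_point:
  assumes "k > 1" "x \<ge> crit_point k"
  shows "k * x * gaussQ x \<ge> gauss_density x"
proof -
  define u where "u = k - 1"
  have u: "u > 0" using assms by (simp add: u_def)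
  have x: "x > 0" using crit_point_pos[OF assms(1)] assms(2) by simp
  have "(crit_point k)\<^sup>2 \<le> x\<^sup>2" using assms crit_point_pos[OF assms(1)] by (intro power_mono) auto
  then have "u * (pi * u + 2) * (crit_point k)\<^sup>2 \<le> u * (pi * u + 2) * x\<^sup>2"
    using u by (intro mult_left_mono) auto
  then have "2 \<le> u * (pi * u + 2) * x\<^sup>2"
    using crit_point_sq[OF assms(1)] by (simp add: u_def)
  then have "pi * 2 \<le> pi * (u * (pi * u + 2) * x\<^sup>2)" by simp
  then have "x\<^sup>2 + 2 * pi \<le> ((pi * u + 1) * x)\<^sup>2"
    by (simp add: power2_eq_square algebra_simps)
  then have "sqrt (x\<^sup>2 + 2 * pi) \<le> (pi * u + 1) * x"
    using u x by (metis real_sqrt_le_mono real_sqrt_abs abs_of_pos mult_pos_pos add_pos_pos pi_gt_zero zero_less_one)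
  then have den: "boyd_den x \<le> pi * k * x"
    unfolding boyd_den_def u_def by (simp add: algebra_simps)
  have "gauss_density x / (k * x) = pi * gauss_density x / (pi * k * x)" by simp
  also have "\<dots> \<le> boyd_bound x"
    unfolding boyd_bound_def
    using den boyd_den_pos[of x] x gauss_density_pos[of x] by (intro divide_left_mono) auto
  also have "\<dots> \<le> gaussQ x" using gaussQ_ge_boyd_bound x by simp
  finally show ?thesis using x assms(1) by (simp add: field_simps)
qed

lemma exp_sq_div_antimono:
  fixes u y z :: real
  assumes "u \<ge> 0" "0 < z" "z \<le> y" "u * y\<^sup>2 \<le> 1"
  shows "exp (u * y\<^sup>2 / 2) / y \<le> exp (u * z\<^sup>2 / 2) / z"
proof -
  have y: "y > 0" using assms by simp
  define t where "t = u * (y\<^sup>2 - z\<^sup>2) / 2"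
  have "t = u * (y - z) * (y + z) / 2"
    unfolding t_def by (simp add: power2_eq_square algebra_simps)
  also have "\<dots> \<le> u * (y - z) * (2 * y) / 2"
    using assms by (intro divide_right_mono mult_left_mono) auto
  also have "\<dots> = (y - z) * (u * y)" by simp
  also have "\<dots> \<le> (y - z) * (1 / y)"
    using assms y by (intro mult_left_mono) (auto simp: field_simps power2_eq_square)
  also have "(y - z) * (1 / y) = 1 - z / y" using y by (simp add: field_simps)
  also have "\<dots> \<le> - ln (z / y)" using ln_le_minus_one[of "z / y"] assms y by simp
  also have "\<dots> = ln (y / z)" using assms y by (simp add: ln_div)
  finally have "exp t \<le> y / z" using assms y by (metis exp_le_cancel_iff exp_ln divide_pos_pos)
  moreover have "exp (u * y\<^sup>2 / 2) = exp (u * z\<^sup>2 / 2) * exp t"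
    unfolding t_def by (simp add: exp_add[symmetric] algebra_simps diff_divide_distrib)
  ultimately have "exp (u * y\<^sup>2 / 2) \<le> exp (u * z\<^sup>2 / 2) * (y / z)"
    by (metis exp_ge_zero mult_left_mono)
  then show ?thesis using assms y by (simp add: field_simps)
qed

lemma gauss_density_mult_exp:
  "gauss_density z * exp (k * z\<^sup>2 / 2) = exp ((k - 1) * z\<^sup>2 / 2) / sqrt (2 * pi)"
proof -
  have "exp (- (z\<^sup>2) / 2) * exp (k * z\<^sup>2 / 2) = exp ((k - 1) * z\<^sup>2 / 2)"
    by (simp add: exp_add[symmetric] algebra_simps diff_divide_distrib)
  then show ?thesis unfolding gauss_density_def by simp
qed

(* The critical value decreases on (0, x0], because (k - 1) x0^2 <= 1. *)
lemma critical_value_antimono: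
  assumes "k > 1" "0 < z" "z \<le> crit_point k"
  shows "critical_value k (crit_point k) \<le> critical_value k z"
proof -
  define c where "c = crit_point k"
  have "(k - 1) * c\<^sup>2 * 2 \<le> (k - 1) * c\<^sup>2 * (pi * (k - 1) + 2)"
    using assms by (intro mult_left_mono) auto
  then have "(k - 1) * c\<^sup>2 \<le> 1"
    using crit_point_sq[OF assms(1)] by (simp add: c_def algebra_simps)
  then have "exp ((k - 1) * c\<^sup>2 / 2) / c \<le> exp ((k - 1) * z\<^sup>2 / 2) / z"
    using assms by (intro exp_sq_div_antimono) (auto simp: c_def)
  then have "exp ((k - 1) * c\<^sup>2 / 2) / c / (sqrt (2 * pi) * k)
      \<le> exp ((k - 1) * z\<^sup>2 / 2) / z / (sqrt (2 * pi) * k)"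
    using assms by (intro divide_right_mono) auto
  then show ?thesis
    unfolding critical_value_def gauss_density_mult_exp c_def by (simp add: field_simps)
qed

lemma critical_value_at_crit_point:
  assumes "k > 1"
  shows "critical_value k (crit_point k)
    = exp (1 / (pi * (k - 1) + 2)) / (2 * k) * sqrt ((1 / pi) * (k - 1) * (pi * (k - 1) + 2))"
proof -
  define A where "A = (k - 1) * (pi * (k - 1) + 2)"
  define c where "c = crit_point k"
  have A: "A > 0" unfolding A_def using assms by (intro mult_pos_pos add_pos_pos) auto
  have "pi * (k - 1) + 2 > 0" using assms by (intro add_pos_pos) auto
  then have expo: "(k - 1) * c\<^sup>2 / 2 = 1 / (pi * (k - 1) + 2)"
    using crit_point_sq[OF assms] by (simp add: c_def field_simps)
  have "c = sqrt (2 / A)" by (simp add: c_def crit_point_def A_def)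
  then have "sqrt (2 * pi) * c * sqrt (A / pi) = sqrt (2 * pi * (2 / A) * (A / pi))"
    by (simp only: real_sqrt_mult)
  also have "2 * pi * (2 / A) * (A / pi) = 2\<^sup>2" using A by (simp add: field_simps)
  finally have "sqrt (2 * pi) * c * sqrt (A / pi) = 2" by simp
  then have "critical_value k c = exp (1 / (pi * (k - 1) + 2)) / (2 * k) * sqrt (A / pi)"
    unfolding critical_value_def gauss_density_mult_exp expo
    using crit_point_pos[OF assms] assms by (simp add: c_def[symmetric] field_simps)
  moreover have "(1 / pi) * (k - 1) * (pi * (k - 1) + 2) = A / pi" by (simp add: A_def)
  ultimately show ?thesis by (simp add: c_def)
qed

lemma weighted_tail_lower_bound:
  assumes "k > 1"
  shows "critical_value k (crit_point k) \<le> weighted_tail k x"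
proof -
  define c where "c = crit_point k"
  define m where "m = critical_value k c"
  define W' where "W' t = (k * t * gaussQ t - gauss_density t) * exp (k * t\<^sup>2 / 2)" for t
  have c: "c > 0" using crit_point_pos[OF assms] by (simp add: c_def)
  have deriv: "(weighted_tail k has_real_derivative W' t) (at t)" for t
    unfolding W'_def by (rule weighted_tail_deriv)
  have beyond: "k * t * gaussQ t \<ge> gauss_density t" if "t \<ge> c" for t
    using gauss_ratio_beyond_crit_point[OF assms] that by (simp add: c_def)
  have at_c: "m \<le> weighted_tail k c"
    using weighted_tail_ge_critical_value[OF _ c beyond] assms by (simp add: m_def)
  have inner: "m \<le> weighted_tail k t" if "t \<in> {0..c}" for t
  proof (rule lower_bound_by_critical_points[OF c deriv _ at_c _ that])
    show "W' 0 < 0" using gauss_density_pos[of 0] by (simp add: W'_def)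
    fix z assume z: "0 < z" "z < c" "W' z = 0"
    then have "k * z * gaussQ z = gauss_density z" by (simp add: W'_def)
    then have "critical_value k z \<le> weighted_tail k z"
      using weighted_tail_ge_critical_value[of k z] assms z by simp
    moreover have "m \<le> critical_value k z"
      using critical_value_antimono[OF assms, of z] z by (simp add: m_def c_def)
    ultimately show "m \<le> weighted_tail k z" by simp
  qed
  consider "x < 0" | "x \<in> {0..c}" | "c < x" by force
  then have "m \<le> weighted_tail k x"
  proof cases
    case 1
    have "weighted_tail k 0 \<le> weighted_tail k x"
    proof (rule deriv_nonpos_imp_antimono[OF deriv])
      fix t assume "t \<in> {x..0}"
      then have "k * t \<le> 0" using assms by (simp add: mult_nonneg_nonpos)
      then have "k * t * gaussQ t \<le> 0" using gaussQ_nonneg[of t] by (simp add: mult_nonpos_nonneg)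
      then show "W' t \<le> 0" using gauss_density_pos[of t] by (simp add: W'_def mult_nonpos_nonneg)
    qed (use 1 in simp)
    then show ?thesis using inner[of 0] c by simp
  next
    case 3
    have "weighted_tail k c \<le> weighted_tail k x"
      by (rule deriv_nonneg_imp_mono[OF deriv]) (use 3 beyond in \<open>auto simp: W'_def\<close>)
    then show ?thesis using at_c by simp
  qed (use inner in simp)
  then show ?thesis by (simp add: m_def c_def)
qed

theorem theorem1:
  fixes x \<kappa> :: real
  assumes "\<kappa> \<ge> 1"
  shows "gaussQ x \<ge>
    (exp (1 / (pi * (\<kappa> - 1) + 2)) / (2 * \<kappa>)
      * sqrt ((1 / pi) * (\<kappa> - 1) * (pi * (\<kappa> - 1) + 2)))
    * exp (- (\<kappa> * x\<^sup>2) / 2)"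
proof (cases "\<kappa> = 1")
  case True
  then show ?thesis using gaussQ_nonneg[of x] by simp
next
  case False
  with assms have \<kappa>: "\<kappa> > 1" by simp
  have "critical_value \<kappa> (crit_point \<kappa>) * exp (- (\<kappa> * x\<^sup>2) / 2)
      \<le> weighted_tail \<kappa> x * exp (- (\<kappa> * x\<^sup>2) / 2)"
    using weighted_tail_lower_bound[OF \<kappa>] by (intro mult_right_mono) auto
  also have "\<dots> = gaussQ x"
    unfolding weighted_tail_def by (simp add: mult.assoc exp_add[symmetric])
  finally show ?thesis using critical_value_at_crit_point[OF \<kappa>] by simp
qed

end
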